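(* Let $X,Y$ be complex Banach spaces, $\emptyset\ne I\subseteq\mathbb R^n$, let $\mathcal B$ be a non-empty collection of non-empty subsets of $X$ such that every $x\in X$ belongs to some $B\in\mathcal B$, and let $\mathrm R$ be a non-empty collection of sequences in $\mathbb R^n$ such that $\mathbf t+\mathbf b(l)\in I$ whenever $\mathbf t\in I$, $\mathbf b\in\mathrm R$, $l\in\mathbb N$. Suppose that $F:I\times X\to Y$ is $(\mathrm R,\mathcal B)$-multi-almost periodic, $a\ge 0$ and $x\in X$. If there exists a sequence $\mathbf b(\cdot)$ in $\mathrm R$ all of whose subsequences are unbounded and such that $\mathbf T-\mathbf b(l)\in I$ whenever $\mathbf T\in I$ and $l\in\mathbb N$, then $$\sup_{\mathbf t\in I}\|F(\mathbf t;x)\|_Y=\sup_{\mathbf t\in I,\ |\mathbf t|\ge a}\|F(\mathbf t;x)\|_Y.$$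
   Context: A continuous function $F:I\times X\to Y$ is called $(\mathrm R,\mathcal B)$-multi-almost periodic if for every $B\in\mathcal B$ and every sequence $(\mathbf b_k)\in\mathrm R$ there exist a subsequence $(\mathbf b_{k_l})$ of $(\mathbf b_k)$ and a function $F^\ast:I\times X\to Y$ such that $\lim_{l\to\infty}F(\mathbf t+\mathbf b_{k_l};x)=F^\ast(\mathbf t;x)$ uniformly for $x\in B$ and $\mathbf t\in I$. $|\cdot|$ denotes the Euclidean norm. *)

theory Defs
  imports "HOL-Analysis.Analysis"
begin

definition multi_almost_periodic ::
  "(nat \<Rightarrow> real^'n) set \<Rightarrow> 'x set set \<Rightarrow> (real^'n) set
     \<Rightarrow> (real^'n \<Rightarrow> 'x::real_normed_vector \<Rightarrow> 'y::real_normed_vector) \<Rightarrow> bool" where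
  "multi_almost_periodic R \<B> I F \<longleftrightarrow>
     continuous_on (I \<times> UNIV) (\<lambda>(t, x). F t x) \<and>
     (\<forall>B\<in>\<B>. \<forall>b\<in>R. \<exists>r::nat \<Rightarrow> nat. strict_mono r \<and>
        (\<exists>Fs :: real^'n \<Rightarrow> 'x \<Rightarrow> 'y. \<forall>\<epsilon>>0. \<exists>N. \<forall>l\<ge>N. \<forall>t\<in>I. \<forall>x\<in>B.
            dist (F (t + b (r l)) x) (Fs t x) < \<epsilon>))"

end

theory Submission
  imports Defs
begin

text \<open>Fix \<open>t\<^sub>0 \<in> I\<close> and \<open>\<epsilon> > 0\<close>. Along a subsequence \<open>b \<circ> r\<close> the translates
  \<open>F (t + b (r l))\<close> converge uniformly, so for \<open>l, l' \<ge> N\<close> they are \<open>\<epsilon>\<close>-close to each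
  other. Choosing \<open>t = t\<^sub>0 - b (r N)\<close> makes the \<open>N\<close>-th translate equal to \<open>F t\<^sub>0\<close>, and
  since the tail of \<open>b \<circ> r\<close> is unbounded some later translate is evaluated at a point
  \<open>t + b (r l)\<close> of norm at least \<open>a\<close>. Hence every value \<open>\<parallel>F t\<^sub>0 x\<parallel>\<close> is approximated by
  values far out in \<open>I\<close>.\<close>

lemma ereal_SUP_eq_if_approximated:
  fixes f :: "'a \<Rightarrow> real"
  assumes "S \<subseteq> I"
    and approx: "\<And>t e. t \<in> I \<Longrightarrow> e > 0 \<Longrightarrow> \<exists>s\<in>S. f t \<le> f s + e"
  shows "(SUP t\<in>I. ereal (f t)) = (SUP s\<in>S. ereal (f s))"
proof (rule antisym)
  show "(SUP t\<in>I. ereal (f t)) \<le> (SUP s\<in>S. ereal (f s))"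
  proof (rule SUP_least)
    fix t assume "t \<in> I"
    show "ereal (f t) \<le> (SUP s\<in>S. ereal (f s))"
    proof (rule ereal_le_epsilon2)
      fix e :: real assume "e > 0"
      then obtain s where "s \<in> S" and "f t \<le> f s + e"
        using approx \<open>t \<in> I\<close> by blast
      then have "ereal (f t) \<le> ereal (f s) + ereal e" by simp
      also have "\<dots> \<le> (SUP s\<in>S. ereal (f s)) + ereal e"
        using \<open>s \<in> S\<close> by (intro add_right_mono SUP_upper)
      finally show "ereal (f t) \<le> (SUP s\<in>S. ereal (f s)) + ereal e" .
    qed
  qed
  show "(SUP s\<in>S. ereal (f s)) \<le> (SUP t\<in>I. ereal (f t))"
    using \<open>S \<subseteq> I\<close> by (rule SUP_subset_mono) simp
qed

lemma frequently_norm_gt_if_subsequences_unbounded: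
  fixes b :: "nat \<Rightarrow> 'a::real_normed_vector"
  assumes "\<And>r::nat \<Rightarrow> nat. strict_mono r \<Longrightarrow> \<not> bounded (range (b \<circ> r))"
  shows "\<exists>\<^sub>F l in sequentially. C < norm (b l)"
  unfolding frequently_sequentially
proof
  fix N
  have "strict_mono (\<lambda>l::nat. l + N)" by (simp add: strict_mono_def)
  then have "\<not> bounded (range (b \<circ> (\<lambda>l. l + N)))" by (rule assms)
  then obtain l where "\<not> norm (b (l + N)) \<le> C"
    unfolding bounded_iff by auto
  then show "\<exists>l\<ge>N. C < norm (b l)" by (intro exI[of _ "l + N"]) simp
qed

lemma multi_almost_periodicD:
  assumes "multi_almost_periodic R \<B> I F" "B \<in> \<B>" "b \<in> R"
  obtains r :: "nat \<Rightarrow> nat" and Fs where "strict_mono r"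
    and "\<And>e. e > 0 \<Longrightarrow> \<forall>\<^sub>F l in sequentially. \<forall>t\<in>I. \<forall>x\<in>B. dist (F (t + b (r l)) x) (Fs t x) < e"
  using assms unfolding multi_almost_periodic_def eventually_sequentially by metis

lemma multi_almost_periodic_recurs_far_out:
  fixes F :: "real^'n \<Rightarrow> 'x::real_normed_vector \<Rightarrow> 'y::real_normed_vector"
  assumes F: "multi_almost_periodic R \<B> I F"
    and "B \<in> \<B>" "x \<in> B" "b \<in> R"
    and plus: "\<And>t l. t \<in> I \<Longrightarrow> t + b l \<in> I"
    and minus: "\<And>t l. t \<in> I \<Longrightarrow> t - b l \<in> I"
    and unbounded: "\<And>r::nat \<Rightarrow> nat. strict_mono r \<Longrightarrow> \<not> bounded (range (b \<circ> r))"
    and "t\<^sub>0 \<in> I" "e > 0"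
  obtains t where "t \<in> I" "C \<le> norm t" "dist (F t\<^sub>0 x) (F t x) < e"
proof -
  obtain r :: "nat \<Rightarrow> nat" and Fs where "strict_mono r"
    and conv: "\<And>e. e > 0 \<Longrightarrow> \<forall>\<^sub>F l in sequentially. \<forall>t\<in>I. \<forall>y\<in>B. dist (F (t + b (r l)) y) (Fs t y) < e"
    using multi_almost_periodicD[OF F \<open>B \<in> \<B>\<close> \<open>b \<in> R\<close>] by blast
  obtain N where N: "\<And>l t. l \<ge> N \<Longrightarrow> t \<in> I \<Longrightarrow> dist (F (t + b (r l)) x) (Fs t x) < e/2"
    using conv[of "e/2"] \<open>e > 0\<close> \<open>x \<in> B\<close> unfolding eventually_sequentially by auto
  define t where "t = t\<^sub>0 - b (r N)"
  have "t \<in> I" unfolding t_def using minus \<open>t\<^sub>0 \<in> I\<close> .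
  have "\<exists>\<^sub>F l in sequentially. C + norm t < norm ((b \<circ> r) l)"
    using unbounded \<open>strict_mono r\<close>
    by (intro frequently_norm_gt_if_subsequences_unbounded) (metis comp_assoc strict_mono_o)
  then obtain l where "l \<ge> N" and far: "C + norm t < norm (b (r l))"
    unfolding frequently_sequentially by auto
  show thesis
  proof
    show "t + b (r l) \<in> I" using plus \<open>t \<in> I\<close> .
    show "C \<le> norm (t + b (r l))"
      using far norm_triangle_ineq4[of "t + b (r l)" t] by simp
    have "dist (F t\<^sub>0 x) (Fs t x) < e/2"
      using N[of N t] \<open>t \<in> I\<close> by (simp add: t_def)
    moreover have "dist (F (t + b (r l)) x) (Fs t x) < e/2"
      using N \<open>l \<ge> N\<close> \<open>t \<in> I\<close> by blast
    ultimately show "dist (F t\<^sub>0 x) (F (t + b (r l)) x) < e"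
      by (rule dist_triangle_half_l)
  qed
qed

theorem proposition2p6:
  fixes I :: "(real^'n) set"
    and \<B> :: "'x::banach set set"
    and R :: "(nat \<Rightarrow> real^'n) set"
    and F :: "real^'n \<Rightarrow> 'x \<Rightarrow> 'y::banach"
    and a :: real and x :: 'x
  assumes "I \<noteq> {}"
    and "\<B> \<noteq> {}" and "\<forall>B\<in>\<B>. B \<noteq> {}" and "\<forall>y. \<exists>B\<in>\<B>. y \<in> B"
    and "R \<noteq> {}"
    and "\<forall>t\<in>I. \<forall>b\<in>R. \<forall>l. t + b l \<in> I"
    and "multi_almost_periodic R \<B> I F"
    and "a \<ge> 0"
    and "\<exists>b\<in>R. (\<forall>r::nat \<Rightarrow> nat. strict_mono r \<longrightarrow> \<not> bounded (range (b \<circ> r)))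
                 \<and> (\<forall>T\<in>I. \<forall>l. T - b l \<in> I)"
  shows "(SUP t\<in>I. ereal (norm (F t x))) = (SUP t\<in>{t\<in>I. norm t \<ge> a}. ereal (norm (F t x)))"
proof (rule ereal_SUP_eq_if_approximated)
  fix t\<^sub>0 and e :: real assume "t\<^sub>0 \<in> I" "e > 0"
  obtain b where "b \<in> R"
    and "\<And>r::nat \<Rightarrow> nat. strict_mono r \<Longrightarrow> \<not> bounded (range (b \<circ> r))"
    and "\<And>T l. T \<in> I \<Longrightarrow> T - b l \<in> I"
    using assms(9) by blast
  moreover obtain B where "B \<in> \<B>" "x \<in> B" using assms(4) by blast
  ultimately obtain t where "t \<in> I" "a \<le> norm t" "dist (F t\<^sub>0 x) (F t x) < e"
    using multi_almost_periodic_recurs_far_out[OF assms(7)] assms(6) \<open>t\<^sub>0 \<in> I\<close> \<open>e > 0\<close>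
    by metis
  moreover have "norm (F t\<^sub>0 x) \<le> norm (F t x) + dist (F t\<^sub>0 x) (F t x)"
    by (simp add: dist_norm norm_triangle_sub)
  ultimately show "\<exists>s\<in>{t \<in> I. a \<le> norm t}. norm (F t\<^sub>0 x) \<le> norm (F s x) + e"
    by force
qed auto

end
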